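(* Let $\mathcal H$ be the set of pairs $(g,h)$ of Markov policies $g,h:\mathcal X\to\{0,1\}$ with $N^{(g)}(x)\ge N^{(h)}(x)$ for all $x$. Consider (C1): for every $(g,h)\in\mathcal H$ and all $x,z\in\mathcal X$, $\sum_{y}\{[\beta P_{zy}(1)-P_{xy}(1)]^+N^{(g)}(y)-[P_{xy}(1)-\beta P_{zy}(1)]^+N^{(h)}(y)\}\le(1-\beta)^2/\beta$; (C2): for every $(g,h)\in\mathcal H$ and all $x\in\mathcal X$, $\sum_{y}\{[P_{xy}(0)-P_{xy}(1)]^+N^{(g)}(y)-[P_{xy}(1)-P_{xy}(0)]^+N^{(h)}(y)\}\le(1-\beta)/\beta$. Then each of the following implies (C1): (a) $\max_{x,z\in\mathcal X}\sum_{y\in\mathcal X}[\beta P_{zy}(1)-P_{xy}(1)]^+\le(1-\beta)^2/\beta$; (b) $P_{xy}(1)=P_{zy}(1)$ for all $x,y,z\in\mathcal X$. And each of the following implies (C2): (c) $\max_{x\in\mathcal X}\sum_{y\in\mathcal X}[P_{xy}(0)-P_{xy}(1)]^+\le(1-\beta)/\beta$; (d) $\beta\le 0.5$.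
   Context: A restless bandit consists of a finite or countable state space $\mathcal X$, actions $\{0,1\}$, transition matrices $P(0),P(1)$ on $\mathcal X$ ($P_{xy}(a)$ = probability of moving from $x$ to $y$ under action $a$), and a cost function; $\beta\in(0,1)$ is a discount factor. $[u]^+=\max\{u,0\}$. For a Markov policy $g:\mathcal X\to\{0,1\}$ (with $X_{t+1}$ drawn from $P_{X_t\,\cdot}(g(X_t))$), $N^{(g)}(x)=(1-\beta)\mathbb E[\sum_{t\ge0}\beta^t g(X_t)\mid X_0=x]$. *)

theory Defs
  imports "HOL-Analysis.Analysis"
begin

text \<open>Actions are encoded as booleans: True = action 1 (activate), False = action 0.
  A transition kernel is P :: bool => 'x => 'x => real, with P a x y the probability
  of moving from x to y under action a.\<close>

definition stochastic :: "('x \<Rightarrow> 'x \<Rightarrow> real) \<Rightarrow> bool" where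
  "stochastic Q \<longleftrightarrow> (\<forall>x y. 0 \<le> Q x y) \<and> (\<forall>x. ((\<lambda>y. Q x y) has_sum 1) UNIV)"

fun step_prob :: "(bool \<Rightarrow> 'x \<Rightarrow> 'x \<Rightarrow> real) \<Rightarrow> ('x \<Rightarrow> bool) \<Rightarrow> nat \<Rightarrow> 'x \<Rightarrow> 'x \<Rightarrow> real" where
  "step_prob P g 0 x y = (if x = y then 1 else 0)"
| "step_prob P g (Suc t) x y = (\<Sum>\<^sub>\<infinity>z. step_prob P g t x z * P (g z) z y)"

text \<open>N^(g)(x) = (1-beta) E[ sum_t beta^t g(X_t) | X_0 = x ], with the expectation
  E[g(X_t) | X_0 = x] written out as sum_y P^t_{xy} g(y).\<close>
definition Nval :: "real \<Rightarrow> (bool \<Rightarrow> 'x \<Rightarrow> 'x \<Rightarrow> real) \<Rightarrow> ('x \<Rightarrow> bool) \<Rightarrow> 'x \<Rightarrow> real" where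
  "Nval \<beta> P g x = (1 - \<beta>) * (\<Sum>t. \<beta> ^ t * (\<Sum>\<^sub>\<infinity>y. step_prob P g t x y * of_bool (g y)))"

definition posp :: "real \<Rightarrow> real" where
  "posp u = max u 0"

definition Hset :: "real \<Rightarrow> (bool \<Rightarrow> 'x \<Rightarrow> 'x \<Rightarrow> real) \<Rightarrow> (('x \<Rightarrow> bool) \<times> ('x \<Rightarrow> bool)) set" where
  "Hset \<beta> P = {(g, h). \<forall>x. Nval \<beta> P g x \<ge> Nval \<beta> P h x}"

definition C1 :: "real \<Rightarrow> (bool \<Rightarrow> 'x \<Rightarrow> 'x \<Rightarrow> real) \<Rightarrow> bool" where
  "C1 \<beta> P \<longleftrightarrow> (\<forall>(g, h) \<in> Hset \<beta> P. \<forall>x z.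
     (\<Sum>\<^sub>\<infinity>y. posp (\<beta> * P True z y - P True x y) * Nval \<beta> P g y
               - posp (P True x y - \<beta> * P True z y) * Nval \<beta> P h y)
     \<le> (1 - \<beta>)\<^sup>2 / \<beta>)"

definition C2 :: "real \<Rightarrow> (bool \<Rightarrow> 'x \<Rightarrow> 'x \<Rightarrow> real) \<Rightarrow> bool" where
  "C2 \<beta> P \<longleftrightarrow> (\<forall>(g, h) \<in> Hset \<beta> P. \<forall>x.
     (\<Sum>\<^sub>\<infinity>y. posp (P False x y - P True x y) * Nval \<beta> P g y
               - posp (P True x y - P False x y) * Nval \<beta> P h y)
     \<le> (1 - \<beta>) / \<beta>)"

end

theory Submission
  imports Defs
begin

text \<open>Every N-value lies in [0, 1], being a discounted average of the probabilities
  that the policy is active at time t. Hence in each of the sums of (C1) and (C2) the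
  positive parts weighted by N^(g) contribute at most their total mass, and the negative
  terms can be dropped: the conditions (a) and (c) bound exactly this mass. Under (b) the
  mass in (C1) vanishes, since beta P_zy(1) = beta P_xy(1) <= P_xy(1); under (d) the mass in
  (C2) is at most sum_y P_xy(0) = 1 <= (1 - beta)/beta.\<close>

lemma summable_on_sum:
  fixes h :: "'a \<Rightarrow> 'b \<Rightarrow> 'c::topological_comm_monoid_add"
  assumes "finite F" "\<And>y. y \<in> F \<Longrightarrow> (\<lambda>z. h z y) summable_on A"
  shows "(\<lambda>z. \<Sum>y\<in>F. h z y) summable_on A"
  using assms by (induction F rule: finite_induct) (auto intro: summable_on_add)

lemma infsum_sum:
  fixes h :: "'a \<Rightarrow> 'b \<Rightarrow> 'c::{topological_comm_monoid_add, t2_space}"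
  assumes "finite F" "\<And>y. y \<in> F \<Longrightarrow> (\<lambda>z. h z y) summable_on A"
  shows "(\<Sum>\<^sub>\<infinity>z\<in>A. \<Sum>y\<in>F. h z y) = (\<Sum>y\<in>F. \<Sum>\<^sub>\<infinity>z\<in>A. h z y)"
  using assms
proof (induction F rule: finite_induct)
  case (insert y F)
  then show ?case by (simp add: infsum_add summable_on_sum)
qed simp

definition substochastic :: "('x \<Rightarrow> 'x \<Rightarrow> real) \<Rightarrow> bool" where
  "substochastic Q \<longleftrightarrow> (\<forall>x y. 0 \<le> Q x y) \<and> (\<forall>x F. finite F \<longrightarrow> sum (Q x) F \<le> 1)"

lemma stochastic_nonneg: "stochastic Q \<Longrightarrow> 0 \<le> Q x y"
  by (simp add: stochastic_def)

lemma stochastic_infsum: "stochastic Q \<Longrightarrow> (\<Sum>\<^sub>\<infinity>y. Q x y) = 1"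
  by (simp add: stochastic_def infsumI)

lemma stochastic_summable: "stochastic Q \<Longrightarrow> Q x summable_on UNIV"
  unfolding stochastic_def by (metis has_sum_imp_summable)

lemma stochastic_imp_substochastic: "stochastic Q \<Longrightarrow> substochastic Q"
  unfolding substochastic_def
  by (metis stochastic_def finite_sum_le_has_sum subset_UNIV)

lemma substochastic_nonneg: "substochastic Q \<Longrightarrow> 0 \<le> Q x y"
  by (simp add: substochastic_def)

lemma substochastic_sum_le: "substochastic Q \<Longrightarrow> finite F \<Longrightarrow> sum (Q x) F \<le> 1"
  by (simp add: substochastic_def)

lemma substochastic_summable:
  assumes "substochastic Q"
  shows "Q x summable_on A"
proof (rule nonneg_bdd_above_summable_on)
  show "bdd_above (sum (Q x) ` {F. F \<subseteq> A \<and> finite F})"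
    using assms unfolding substochastic_def bdd_above_def by blast
qed (use assms in \<open>simp add: substochastic_nonneg\<close>)

lemma substochastic_infsum_le: "substochastic Q \<Longrightarrow> (\<Sum>\<^sub>\<infinity>y. Q x y) \<le> 1"
  by (rule infsum_le_finite_sums) (simp_all add: substochastic_summable substochastic_sum_le)

lemma substochastic_le_one: "substochastic Q \<Longrightarrow> Q x y \<le> 1"
  using substochastic_sum_le[of Q "{y}" x] by simp

lemma substochastic_weighted_infsum:
  assumes Q: "substochastic Q" and f: "\<And>y. 0 \<le> f y" "\<And>y. f y \<le> 1"
  shows "0 \<le> (\<Sum>\<^sub>\<infinity>y. Q x y * f y)" "(\<Sum>\<^sub>\<infinity>y. Q x y * f y) \<le> 1"
proof -
  have bounds: "0 \<le> Q x y * f y" "Q x y * f y \<le> Q x y" for y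
    by (simp_all add: substochastic_nonneg[OF Q] f mult_left_le)
  have summable: "(\<lambda>y. Q x y * f y) summable_on UNIV"
    by (rule summable_on_comparison_test[OF substochastic_summable[OF Q, of x]]) (simp_all add: bounds)
  show "0 \<le> (\<Sum>\<^sub>\<infinity>y. Q x y * f y)"
    by (rule infsum_nonneg) (simp add: bounds)
  have "(\<Sum>\<^sub>\<infinity>y. Q x y * f y) \<le> (\<Sum>\<^sub>\<infinity>y. Q x y)"
    by (rule infsum_mono[OF summable substochastic_summable[OF Q]]) (simp add: bounds)
  also have "\<dots> \<le> 1"
    by (rule substochastic_infsum_le[OF Q])
  finally show "(\<Sum>\<^sub>\<infinity>y. Q x y * f y) \<le> 1" .
qed

lemma substochastic_compose:
  assumes S: "substochastic S" and Q: "substochastic Q"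
  shows "substochastic (\<lambda>x y. \<Sum>\<^sub>\<infinity>z. S x z * Q z y)"
  unfolding substochastic_def
proof (intro conjI allI impI)
  show "0 \<le> (\<Sum>\<^sub>\<infinity>z. S x z * Q z y)" for x y
    by (intro infsum_nonneg mult_nonneg_nonneg substochastic_nonneg[OF S] substochastic_nonneg[OF Q])
  fix x and F :: "'a set"
  assume F: "finite F"
  have summable: "(\<lambda>z. S x z * Q z y) summable_on UNIV" for y
  proof (rule summable_on_comparison_test[OF substochastic_summable[OF S]])
    show "S x z * Q z y \<le> S x z" for z
      by (rule mult_left_le[OF substochastic_le_one[OF Q] substochastic_nonneg[OF S]])
    show "0 \<le> S x z * Q z y" for z
      by (intro mult_nonneg_nonneg substochastic_nonneg[OF S] substochastic_nonneg[OF Q])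
  qed
  have "(\<Sum>y\<in>F. \<Sum>\<^sub>\<infinity>z. S x z * Q z y) = (\<Sum>\<^sub>\<infinity>z. S x z * sum (Q z) F)"
    unfolding sum_distrib_left by (rule infsum_sum[OF F summable, symmetric])
  also have "\<dots> \<le> (\<Sum>\<^sub>\<infinity>z. S x z)"
  proof (rule infsum_mono)
    show "(\<lambda>z. S x z * sum (Q z) F) summable_on UNIV"
      unfolding sum_distrib_left by (rule summable_on_sum[OF F summable])
    show "S x summable_on UNIV"
      by (rule substochastic_summable[OF S])
    show "S x z * sum (Q z) F \<le> S x z" for z
      by (rule mult_left_le[OF substochastic_sum_le[OF Q F] substochastic_nonneg[OF S]])
  qed
  also have "\<dots> \<le> 1"
    by (rule substochastic_infsum_le[OF S])
  finally show "(\<Sum>y\<in>F. \<Sum>\<^sub>\<infinity>z. S x z * Q z y) \<le> 1" .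
qed

lemma substochastic_step_prob:
  assumes "\<And>a. substochastic (P a)"
  shows "substochastic (step_prob P g t)"
proof (induction t)
  case 0
  have "sum (step_prob P g 0 x) F \<le> 1" if "finite F" for x F
    using that by simp
  then show ?case by (simp add: substochastic_def)
next
  case (Suc t)
  have "substochastic (\<lambda>z y. P (g z) z y)"
    using assms unfolding substochastic_def by blast
  with Suc have "substochastic (\<lambda>x y. \<Sum>\<^sub>\<infinity>z. step_prob P g t x z * P (g z) z y)"
    by (rule substochastic_compose)
  then show ?case by simp
qed

lemma discounted_average_bounds:
  fixes \<beta> :: real
  assumes \<beta>: "0 \<le> \<beta>" "\<beta> < 1" and a: "\<And>t. 0 \<le> a t" "\<And>t. a t \<le> 1"
  shows "0 \<le> (1 - \<beta>) * (\<Sum>t. \<beta> ^ t * a t)" "(1 - \<beta>) * (\<Sum>t. \<beta> ^ t * a t) \<le> 1"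
proof -
  have geometric: "summable (\<lambda>t. \<beta> ^ t)"
    using \<beta> by (simp add: summable_geometric)
  have terms: "0 \<le> \<beta> ^ t * a t" "\<beta> ^ t * a t \<le> \<beta> ^ t" for t
    using \<beta> a by (simp_all add: mult_left_le)
  have summable: "summable (\<lambda>t. \<beta> ^ t * a t)"
    by (rule summable_comparison_test'[OF geometric, where N = 0]) (simp add: terms)
  show "0 \<le> (1 - \<beta>) * (\<Sum>t. \<beta> ^ t * a t)"
    using \<beta> terms(1) summable by (simp add: suminf_nonneg)
  have "(\<Sum>t. \<beta> ^ t * a t) \<le> (\<Sum>t. \<beta> ^ t)"
    by (rule suminf_le[OF terms(2) summable geometric])
  also have "\<dots> = 1 / (1 - \<beta>)"
    using \<beta> by (simp add: suminf_geometric)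
  finally show "(1 - \<beta>) * (\<Sum>t. \<beta> ^ t * a t) \<le> 1"
    using \<beta> by (simp add: field_simps)
qed

lemma Nval_bounds:
  assumes "0 \<le> \<beta>" "\<beta> < 1" and "\<And>a. stochastic (P a)"
  shows "0 \<le> Nval \<beta> P g x" "Nval \<beta> P g x \<le> 1"
proof -
  define a where "a t = (\<Sum>\<^sub>\<infinity>y. step_prob P g t x y * of_bool (g y))" for t
  have "substochastic (step_prob P g t)" for t
    using assms(3) by (simp add: stochastic_imp_substochastic substochastic_step_prob)
  then have "0 \<le> a t \<and> a t \<le> 1" for t
    using substochastic_weighted_infsum[of "step_prob P g t" "\<lambda>y. of_bool (g y)" x]
    unfolding a_def by simp
  moreover have "Nval \<beta> P g x = (1 - \<beta>) * (\<Sum>t. \<beta> ^ t * a t)"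
    by (simp add: Nval_def a_def)
  ultimately show "0 \<le> Nval \<beta> P g x" "Nval \<beta> P g x \<le> 1"
    using discounted_average_bounds[OF assms(1,2), of a] by simp_all
qed

lemma posp_nonneg: "0 \<le> posp u"
  by (simp add: posp_def)

lemma summable_on_posp_diff:
  assumes "f summable_on A" "\<And>y. 0 \<le> f y" "\<And>y. 0 \<le> g y"
  shows "(\<lambda>y. posp (f y - g y)) summable_on A"
  by (rule summable_on_comparison_test[OF assms(1)]) (use assms in \<open>auto simp: posp_def\<close>)

lemma infsum_posp_weighted_diff_le:
  fixes u v N N' :: "'a \<Rightarrow> real"
  assumes u: "u summable_on UNIV" "\<And>y. 0 \<le> u y" and v: "v summable_on UNIV" "\<And>y. 0 \<le> v y"
    and N: "\<And>y. 0 \<le> N y" "\<And>y. N y \<le> 1" and N': "\<And>y. 0 \<le> N' y" "\<And>y. N' y \<le> 1"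
  shows "(\<Sum>\<^sub>\<infinity>y. posp (u y - v y) * N y - posp (v y - u y) * N' y) \<le> (\<Sum>\<^sub>\<infinity>y. posp (u y - v y))"
proof (rule infsum_mono)
  have gain: "(\<lambda>y. posp (u y - v y)) summable_on UNIV"
    by (rule summable_on_posp_diff[where g = v, OF u v(2)])
  then show "(\<lambda>y. posp (u y - v y)) summable_on UNIV" .
  have "(\<lambda>y. posp (u y - v y) * N y) summable_on UNIV"
    by (rule summable_on_comparison_test[OF gain])
      (use mult_left_le[OF N(2) posp_nonneg] in blast, simp add: posp_nonneg N)
  moreover have "(\<lambda>y. posp (v y - u y) * N' y) summable_on UNIV"
    by (rule summable_on_comparison_test[OF summable_on_posp_diff[where g = u, OF v u(2)]])
      (use mult_left_le[OF N'(2) posp_nonneg] in blast, simp add: posp_nonneg N')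
  ultimately have "(\<lambda>y. posp (u y - v y) * N y + - (posp (v y - u y) * N' y)) summable_on UNIV"
    by (intro summable_on_add) (simp_all add: summable_on_uminus)
  then show "(\<lambda>y. posp (u y - v y) * N y - posp (v y - u y) * N' y) summable_on UNIV"
    by simp
  show "posp (u y - v y) * N y - posp (v y - u y) * N' y \<le> posp (u y - v y)" for y
  proof -
    have "posp (u y - v y) * N y \<le> posp (u y - v y)"
      by (rule mult_left_le[OF N(2) posp_nonneg])
    moreover have "0 \<le> posp (v y - u y) * N' y"
      by (simp add: posp_nonneg N'(1))
    ultimately show ?thesis by linarith
  qed
qed

lemma C1_if_posp_mass_le:
  assumes "0 < \<beta>" "\<beta> < 1" and stoch: "\<And>a. stochastic (P a)"
    and mass: "\<forall>x z. (\<Sum>\<^sub>\<infinity>y. posp (\<beta> * P True z y - P True x y)) \<le> (1 - \<beta>)\<^sup>2 / \<beta>"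
  shows "C1 \<beta> P"
proof -
  have "(\<Sum>\<^sub>\<infinity>y. posp (\<beta> * P True z y - P True x y) * Nval \<beta> P g y
           - posp (P True x y - \<beta> * P True z y) * Nval \<beta> P h y) \<le> (1 - \<beta>)\<^sup>2 / \<beta>" for g h x z
  proof -
    have "(\<Sum>\<^sub>\<infinity>y. posp (\<beta> * P True z y - P True x y) * Nval \<beta> P g y
             - posp (P True x y - \<beta> * P True z y) * Nval \<beta> P h y)
          \<le> (\<Sum>\<^sub>\<infinity>y. posp (\<beta> * P True z y - P True x y))"
      using assms(1,2) Nval_bounds[OF _ _ stoch, of \<beta>]
      by (intro infsum_posp_weighted_diff_le)
        (simp_all add: summable_on_cmult_right stochastic_summable[OF stoch] stochastic_nonneg[OF stoch])
    also have "\<dots> \<le> (1 - \<beta>)\<^sup>2 / \<beta>"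
      using mass by blast
    finally show ?thesis .
  qed
  then show ?thesis
    unfolding C1_def by blast
qed

lemma C2_if_posp_mass_le:
  assumes "0 < \<beta>" "\<beta> < 1" and stoch: "\<And>a. stochastic (P a)"
    and mass: "\<forall>x. (\<Sum>\<^sub>\<infinity>y. posp (P False x y - P True x y)) \<le> (1 - \<beta>) / \<beta>"
  shows "C2 \<beta> P"
proof -
  have "(\<Sum>\<^sub>\<infinity>y. posp (P False x y - P True x y) * Nval \<beta> P g y
           - posp (P True x y - P False x y) * Nval \<beta> P h y) \<le> (1 - \<beta>) / \<beta>" for g h x
  proof -
    have "(\<Sum>\<^sub>\<infinity>y. posp (P False x y - P True x y) * Nval \<beta> P g y
             - posp (P True x y - P False x y) * Nval \<beta> P h y)
          \<le> (\<Sum>\<^sub>\<infinity>y. posp (P False x y - P True x y))"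
      using assms(1,2) Nval_bounds[OF _ _ stoch, of \<beta>]
      by (intro infsum_posp_weighted_diff_le)
        (simp_all add: stochastic_summable[OF stoch] stochastic_nonneg[OF stoch])
    also have "\<dots> \<le> (1 - \<beta>) / \<beta>"
      using mass by blast
    finally show ?thesis .
  qed
  then show ?thesis
    unfolding C2_def by blast
qed

lemma C1_if_rows_equal:
  assumes beta: "0 < \<beta>" "\<beta> < 1" and stoch: "\<And>a. stochastic (P a)"
    and rows: "\<forall>x y z. P True x y = P True z y"
  shows "C1 \<beta> P"
proof (rule C1_if_posp_mass_le[OF beta stoch], intro allI)
  fix x z
  have "posp (\<beta> * P True z y - P True x y) = 0" for y
  proof -
    have "\<beta> * P True x y \<le> P True x y"
      using beta stochastic_nonneg[OF stoch] by (simp add: mult_left_le_one_le)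
    then show ?thesis
      using rows[rule_format, of z y x] by (simp add: posp_def)
  qed
  then show "(\<Sum>\<^sub>\<infinity>y. posp (\<beta> * P True z y - P True x y)) \<le> (1 - \<beta>)\<^sup>2 / \<beta>"
    using beta by simp
qed

lemma C2_if_discount_le_half:
  assumes beta: "0 < \<beta>" "\<beta> \<le> 1/2" and stoch: "\<And>a. stochastic (P a)"
  shows "C2 \<beta> P"
proof -
  have "(\<Sum>\<^sub>\<infinity>y. posp (P False x y - P True x y)) \<le> (1 - \<beta>) / \<beta>" for x
  proof -
    have "(\<Sum>\<^sub>\<infinity>y. posp (P False x y - P True x y)) \<le> (\<Sum>\<^sub>\<infinity>y. P False x y)"
      using stoch by (intro infsum_mono summable_on_posp_diff stochastic_summable)
        (auto simp: posp_def stochastic_nonneg)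
    also have "\<dots> = 1"
      using stoch by (rule stochastic_infsum)
    also have "1 \<le> (1 - \<beta>) / \<beta>"
      using beta by (simp add: field_simps)
    finally show ?thesis .
  qed
  moreover have "\<beta> < 1"
    using beta by simp
  ultimately show ?thesis
    using C2_if_posp_mass_le[where P = P, OF beta(1) _ stoch] by blast
qed

theorem proposition2:
  fixes P :: "bool \<Rightarrow> 'x::countable \<Rightarrow> 'x \<Rightarrow> real" and \<beta> :: real
  assumes beta: "0 < \<beta>" "\<beta> < 1"
    and stoch: "\<And>a. stochastic (P a)"
  shows "((\<forall>x z. (\<Sum>\<^sub>\<infinity>y. posp (\<beta> * P True z y - P True x y)) \<le> (1 - \<beta>)\<^sup>2 / \<beta>) \<longrightarrow> C1 \<beta> P)
       \<and> ((\<forall>x y z. P True x y = P True z y) \<longrightarrow> C1 \<beta> P)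
       \<and> ((\<forall>x. (\<Sum>\<^sub>\<infinity>y. posp (P False x y - P True x y)) \<le> (1 - \<beta>) / \<beta>) \<longrightarrow> C2 \<beta> P)
       \<and> (\<beta> \<le> 1/2 \<longrightarrow> C2 \<beta> P)"
  using C1_if_posp_mass_le[where P = P, OF beta stoch] C1_if_rows_equal[where P = P, OF beta stoch]
    C2_if_posp_mass_le[where P = P, OF beta stoch] C2_if_discount_le_half[where P = P, OF beta(1) _ stoch]
  by blast

end
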